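(* Let $\{d_i,\mathcal F_i\}_{i=1}^n$ be a martingale difference sequence. Let $v_{i-1}$ be $\mathcal F_{i-1}$-measurable random variables such that $\mathbb E[\exp(\lambda d_i)\mid\mathcal F_{i-1}]\le\exp\!\left(\frac{\lambda^2}{2}v_{i-1}\right)$ for all $\lambda>0$ and all $i\in[n]$. Define $S_n=\sum_{i=1}^n d_i$ and $V_n=\sum_{i=1}^n v_{i-1}$. Let $\delta\in(0,1)$ and suppose there are positive values $R(\delta)$ and $\alpha_1,\dots,\alpha_n$ such that $\Pr\!\left[V_n\le\sum_{i=1}^n\alpha_id_i+R(\delta)\right]\ge1-\delta$. Then for every $x>0$, \[ \Pr[S_n\ge x]\le\delta+\exp\!\left(-\frac{x^2}{4\left(\max_{i\in[n]}\alpha_i\right)x+8R(\delta)}\right). \]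
   Context: $[n]=\{1,\dots,n\}$. *)

theory Defs
  imports "HOL-Probability.Probability"
begin

definition mart_diff_seq ::
  "'a measure \<Rightarrow> (nat \<Rightarrow> 'a measure) \<Rightarrow> (nat \<Rightarrow> 'a \<Rightarrow> real) \<Rightarrow> nat \<Rightarrow> bool" where
  "mart_diff_seq M F d n \<longleftrightarrow>
     (\<forall>i\<le>n. subalgebra M (F i)) \<and>
     (\<forall>i j. i \<le> j \<longrightarrow> j \<le> n \<longrightarrow> sets (F i) \<subseteq> sets (F j)) \<and>
     (\<forall>i\<in>{1..n}. d i \<in> borel_measurable (F i) \<and> integrable M (d i) \<and>
        (AE x in M. real_cond_exp M (F (i - 1)) (d i) x = 0))"

end

(*
  Chernoff argument with a variance-adapted exponent. For deterministic positive weights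
  \<theta>_i, the conditional sub-Gaussian bound makes exp (\<Sum> \<theta>_i d_i - \<theta>_i\<^sup>2/2 v_(i-1))
  a nonnegative supermartingale, so its expectation is at most 1. Taking
  \<theta>_i = l + 2 l\<^sup>2 \<alpha>_i with l = x / (2 a x + 4 R), a = max \<alpha>_i, gives \<theta>_i \<le> 2 l, hence
  \<theta>_i\<^sup>2/2 \<le> 2 l\<^sup>2; since v \<ge> 0, on the event {S_n \<ge> x, V_n \<le> \<Sum> \<alpha>_i d_i + R} the exponent
  is at least l x - 2 l\<^sup>2 R \<ge> x\<^sup>2 / (4 a x + 8 R), and Markov's inequality bounds that event.
  The complementary event has probability at most \<delta>.
  Nonnegativity of v follows from the hypothesis at l = 1:
  exp (v/2) \<ge> E[exp d_i | F_(i-1)] \<ge> 1 + E[d_i | F_(i-1)] = 1.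
*)

theory Submission
  imports Defs
begin

context finite_measure_subalgebra
begin

lemma measure_le_integral_indicator_exp:
  assumes g: "integrable M g" and g_cond: "AE \<omega> in M. real_cond_exp M F g \<omega> = 0"
    and A: "A \<in> sets F"
    and int_exp: "integrable M (\<lambda>\<omega>. indicator A \<omega> * exp (g \<omega>))"
  shows "measure M A \<le> (\<integral>\<omega>. indicator A \<omega> * exp (g \<omega>) \<partial>M)"
proof -
  have A_M: "A \<in> sets M" using A subalg by (simp add: subalgebra_def subset_iff)
  have int_ind: "integrable M (\<lambda>\<omega>. indicator A \<omega> :: real)"
    using A_M by (simp add: emeasure_eq_measure)
  have int_g: "integrable M (\<lambda>\<omega>. indicator A \<omega> * g \<omega>)"
    using integrable_mult_indicator[OF A_M g] by simp
  have "(\<integral>\<omega>. indicator A \<omega> * g \<omega> \<partial>M) = (LINT \<omega>:A|M. real_cond_exp M F g \<omega>)"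
    using real_cond_exp_intA[OF g A] by (simp add: set_lebesgue_integral_def)
  also have "\<dots> = 0"
    unfolding set_lebesgue_integral_def by (rule integral_eq_zero_AE) (use g_cond in auto)
  finally have "measure M A = (\<integral>\<omega>. indicator A \<omega> * (1 + g \<omega>) \<partial>M)"
    using int_ind int_g A_M by (simp add: distrib_left)
  also have "\<dots> \<le> (\<integral>\<omega>. indicator A \<omega> * exp (g \<omega>) \<partial>M)"
    by (rule integral_mono) (use int_ind int_g int_exp in \<open>auto simp: distrib_left indicator_def\<close>)
  finally show ?thesis .
qed

lemma measure_le_integral_indicator_exp_of_nn_cond_exp_le:
  assumes g: "integrable M g" and g_cond: "AE \<omega> in M. real_cond_exp M F g \<omega> = 0"
    and mgf: "AE \<omega> in M. nn_cond_exp M F (\<lambda>\<omega>. ennreal (exp (g \<omega>))) \<omega> \<le> ennreal (exp (w \<omega>))"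
    and A: "A \<in> sets F"
    and int_w: "integrable M (\<lambda>\<omega>. indicator A \<omega> * exp (w \<omega>))"
  shows "measure M A \<le> (\<integral>\<omega>. indicator A \<omega> * exp (w \<omega>) \<partial>M)"
proof -
  have [measurable]: "g \<in> borel_measurable M" "A \<in> sets M"
    using g A subalg by (auto simp: subalgebra_def)
  have "(\<integral>\<^sup>+\<omega>. indicator A \<omega> * ennreal (exp (g \<omega>)) \<partial>M)
      = (\<integral>\<^sup>+\<omega>. indicator A \<omega> * nn_cond_exp M F (\<lambda>\<omega>. ennreal (exp (g \<omega>))) \<omega> \<partial>M)"
    by (rule nn_cond_exp_intg[symmetric]) (use A in measurable)
  also have "\<dots> \<le> (\<integral>\<^sup>+\<omega>. indicator A \<omega> * ennreal (exp (w \<omega>)) \<partial>M)"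
    by (rule nn_integral_mono_AE) (use mgf in \<open>eventually_elim, auto intro: mult_left_mono\<close>)
  finally have nn_le: "(\<integral>\<^sup>+\<omega>. ennreal (indicator A \<omega> * exp (g \<omega>)) \<partial>M)
      \<le> ennreal (\<integral>\<omega>. indicator A \<omega> * exp (w \<omega>) \<partial>M)"
    by (simp add: nn_integral_eq_integral[OF int_w, symmetric] indicator_mult_ennreal ennreal_mult'')
  then have int_g: "integrable M (\<lambda>\<omega>. indicator A \<omega> * exp (g \<omega>))"
    by (intro integrableI_nonneg) (auto intro: le_less_trans)
  have "(\<integral>\<^sup>+\<omega>. ennreal (indicator A \<omega> * exp (g \<omega>)) \<partial>M)
      = ennreal (\<integral>\<omega>. indicator A \<omega> * exp (g \<omega>) \<partial>M)"
    by (rule nn_integral_eq_integral[OF int_g]) auto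
  then have "(\<integral>\<omega>. indicator A \<omega> * exp (g \<omega>) \<partial>M) \<le> (\<integral>\<omega>. indicator A \<omega> * exp (w \<omega>) \<partial>M)"
    using nn_le by (simp add: ennreal_le_iff)
  with measure_le_integral_indicator_exp[OF g g_cond A int_g] show ?thesis by linarith
qed

lemma AE_nonneg_of_nn_cond_exp_exp_le:
  assumes g: "integrable M g" and g_cond: "AE \<omega> in M. real_cond_exp M F g \<omega> = 0"
    and w: "w \<in> borel_measurable F"
    and mgf: "AE \<omega> in M. nn_cond_exp M F (\<lambda>\<omega>. ennreal (exp (g \<omega>))) \<omega> \<le> ennreal (exp (w \<omega>))"
  shows "AE \<omega> in M. 0 \<le> w \<omega>"
proof -
  define A where "A = {\<omega> \<in> space M. w \<omega> < 0}"
  have A_F: "A \<in> sets F"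
  proof -
    have "A = {\<omega> \<in> space F. w \<omega> < 0}" using subalg by (simp add: A_def subalgebra_def)
    also have "\<dots> \<in> sets F" using w by measurable
    finally show ?thesis .
  qed
  have A_M: "A \<in> sets M" using A_F subalg by (simp add: subalgebra_def subset_iff)
  have int_A: "integrable M (\<lambda>\<omega>. indicator A \<omega> :: real)"
    using A_M by (simp add: emeasure_eq_measure)
  have int_w: "integrable M (\<lambda>\<omega>. indicator A \<omega> * exp (w \<omega>))"
    using measurable_from_subalg[OF subalg w] A_M
    by (intro integrable_const_bound[where B=1]) (auto simp: A_def split: split_indicator)
  have "emeasure M A = 0"
  proof (rule ccontr)
    assume "emeasure M A \<noteq> 0"
    then have "(\<integral>\<omega>. indicator A \<omega> * exp (w \<omega>) \<partial>M) < (\<integral>\<omega>. indicator A \<omega> \<partial>M)"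
      by (intro integral_less_AE[OF int_w int_A _ A_M]) (auto simp: A_def split: split_indicator)
    then have "(\<integral>\<omega>. indicator A \<omega> * exp (w \<omega>) \<partial>M) < measure M A"
      using A_M by (simp add: Int_absorb2 sets.sets_into_space)
    with measure_le_integral_indicator_exp_of_nn_cond_exp_le[OF g g_cond mgf A_F int_w]
    show False by linarith
  qed
  then have "AE \<omega> in M. \<omega> \<notin> A" using A_M by (intro AE_not_in) (simp add: null_sets_def)
  then show ?thesis using AE_space by eventually_elim (auto simp: A_def)
qed

end

definition supermart_exponent ::
  "(nat \<Rightarrow> real) \<Rightarrow> (nat \<Rightarrow> 'a \<Rightarrow> real) \<Rightarrow> (nat \<Rightarrow> 'a \<Rightarrow> real) \<Rightarrow> nat \<Rightarrow> 'a \<Rightarrow> real" where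
  "supermart_exponent \<theta> d v k \<omega> = (\<Sum>i=1..k. \<theta> i * d i \<omega> - (\<theta> i)\<^sup>2 / 2 * v (i - 1) \<omega>)"

lemma supermart_exponent_Suc:
  "supermart_exponent \<theta> d v (Suc k) \<omega>
     = supermart_exponent \<theta> d v k \<omega> + \<theta> (Suc k) * d (Suc k) \<omega> - (\<theta> (Suc k))\<^sup>2 / 2 * v k \<omega>"
  by (simp add: supermart_exponent_def)

lemma supermart_exponent_ge:
  fixes l c x R :: real
  assumes "0 \<le> l" "0 \<le> c"
    and v_nonneg: "\<And>i. i \<in> {1..n} \<Longrightarrow> 0 \<le> v (i - 1) \<omega>"
    and \<theta>_le: "\<And>i. i \<in> {1..n} \<Longrightarrow> (l + c * \<alpha> i)\<^sup>2 / 2 \<le> c"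
    and S: "x \<le> (\<Sum>i=1..n. d i \<omega>)"
    and V: "(\<Sum>i=1..n. v (i - 1) \<omega>) \<le> (\<Sum>i=1..n. \<alpha> i * d i \<omega>) + R"
  shows "l * x - c * R \<le> supermart_exponent (\<lambda>i. l + c * \<alpha> i) d v n \<omega>"
proof -
  have "(\<Sum>i=1..n. (l + c * \<alpha> i)\<^sup>2 / 2 * v (i - 1) \<omega>) \<le> (\<Sum>i=1..n. c * v (i - 1) \<omega>)"
    by (intro sum_mono mult_right_mono \<theta>_le v_nonneg)
  also have "\<dots> \<le> c * ((\<Sum>i=1..n. \<alpha> i * d i \<omega>) + R)"
    using V \<open>0 \<le> c\<close> by (simp add: sum_distrib_left[symmetric] mult_left_mono)
  finally have "l * x - c * R
      \<le> l * (\<Sum>i=1..n. d i \<omega>) + c * (\<Sum>i=1..n. \<alpha> i * d i \<omega>)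
        - (\<Sum>i=1..n. (l + c * \<alpha> i)\<^sup>2 / 2 * v (i - 1) \<omega>)"
    using mult_left_mono[OF S \<open>0 \<le> l\<close>] by (simp add: algebra_simps)
  also have "\<dots> = supermart_exponent (\<lambda>i. l + c * \<alpha> i) d v n \<omega>"
    by (simp add: supermart_exponent_def sum_subtractf sum.distrib sum_distrib_left algebra_simps)
  finally show ?thesis .
qed

lemma chernoff_parameter_choice:
  fixes a R x :: real
  assumes "0 < a" "0 < R" "0 < x"
  defines "l \<equiv> x / (2 * a * x + 4 * R)"
  shows "0 < l"
    and "\<And>b. 0 \<le> b \<Longrightarrow> b \<le> a \<Longrightarrow> (l + 2 * l\<^sup>2 * b)\<^sup>2 / 2 \<le> 2 * l\<^sup>2"
    and "x\<^sup>2 / (4 * a * x + 8 * R) \<le> l * x - 2 * l\<^sup>2 * R"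
proof -
  define D where "D = 2 * a * x + 4 * R"
  have D: "0 < D" "4 * R \<le> D" "2 * a * x \<le> D"
    unfolding D_def using assms(2) mult_pos_pos[OF assms(1,3)] by (simp_all add: mult.assoc)
  have l_D: "l = x / D" by (simp add: l_def D_def)
  show "0 < l" using D assms(3) by (simp add: l_D)
  have "2 * l * a \<le> 1"
    using D \<open>0 < a\<close> by (simp add: l_D field_simps)
  show "(l + 2 * l\<^sup>2 * b)\<^sup>2 / 2 \<le> 2 * l\<^sup>2" if "0 \<le> b" "b \<le> a" for b
  proof -
    have "l + 2 * l\<^sup>2 * b \<le> l + l * (2 * l * a)"
      using that \<open>0 < l\<close> by (simp add: power2_eq_square mult_left_mono)
    also have "\<dots> \<le> 2 * l" using \<open>2 * l * a \<le> 1\<close> \<open>0 < l\<close> by (simp add: mult_left_le)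
    finally have "(l + 2 * l\<^sup>2 * b)\<^sup>2 \<le> (2 * l)\<^sup>2"
      using that \<open>0 < l\<close> by (intro power_mono) auto
    then show ?thesis by (simp add: power2_eq_square)
  qed
  have "l * x - 2 * l\<^sup>2 * R = x\<^sup>2 * (D - 2 * R) / D\<^sup>2"
    using D by (simp add: l_D field_simps power2_eq_square)
  also have "\<dots> \<ge> x\<^sup>2 * (D / 2) / D\<^sup>2"
    using D by (intro divide_right_mono mult_left_mono) auto
  also have "x\<^sup>2 * (D / 2) / D\<^sup>2 = x\<^sup>2 / (2 * D)"
    using D by (simp add: field_simps power2_eq_square)
  also have "2 * D = 4 * a * x + 8 * R"
    by (simp add: D_def)
  finally show "x\<^sup>2 / (4 * a * x + 8 * R) \<le> l * x - 2 * l\<^sup>2 * R" .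
qed

locale cond_subgaussian_mds = prob_space M
  for M :: "'a measure" +
  fixes F :: "nat \<Rightarrow> 'a measure" and d v :: "nat \<Rightarrow> 'a \<Rightarrow> real" and n :: nat
  assumes mds: "mart_diff_seq M F d n"
    and v_measurable: "\<And>i. i \<in> {1..n} \<Longrightarrow> v (i - 1) \<in> borel_measurable (F (i - 1))"
    and cond_mgf_le: "\<And>i l. i \<in> {1..n} \<Longrightarrow> l > 0 \<Longrightarrow>
          AE \<omega> in M. nn_cond_exp M (F (i - 1)) (\<lambda>\<omega>. ennreal (exp (l * d i \<omega>))) \<omega>
                       \<le> ennreal (exp (l\<^sup>2 / 2 * v (i - 1) \<omega>))"
begin

lemma subalgebra_F: "j \<le> n \<Longrightarrow> subalgebra M (F j)"
  using mds by (simp add: mart_diff_seq_def)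

lemma finite_measure_subalgebra_F: "j \<le> n \<Longrightarrow> finite_measure_subalgebra M (F j)"
  by (simp add: finite_measure_subalgebra_def finite_measure_subalgebra_axioms_def
      finite_measure_axioms subalgebra_F)

lemma borel_measurable_F_mono:
  assumes "i \<le> j" "j \<le> n" "f \<in> borel_measurable (F i)"
  shows "f \<in> borel_measurable (F j)"
proof -
  have "subalgebra (F j) (F i)"
    using assms mds subalgebra_F[of i] subalgebra_F[of j] by (auto simp: mart_diff_seq_def subalgebra_def)
  then show ?thesis using assms(3) by (rule measurable_from_subalg)
qed

lemma
  assumes "i \<in> {1..n}"
  shows borel_borel_measurable_d_F: "d i \<in> borel_measurable (F i)"
    and integrable_d: "integrable M (d i)"
    and cond_exp_d: "AE \<omega> in M. real_cond_exp M (F (i - 1)) (d i) \<omega> = 0"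
  using mds assms by (auto simp: mart_diff_seq_def)

lemma borel_measurable_d: "i \<in> {1..n} \<Longrightarrow> d i \<in> borel_measurable M"
  using integrable_d by blast

lemma borel_measurable_v: "i \<in> {1..n} \<Longrightarrow> v (i - 1) \<in> borel_measurable M"
  using measurable_from_subalg[OF subalgebra_F v_measurable] by fastforce

lemma borel_measurable_sums [measurable]:
  "(\<lambda>\<omega>. \<Sum>i=1..n. d i \<omega>) \<in> borel_measurable M"
  "(\<lambda>\<omega>. \<Sum>i=1..n. v (i - 1) \<omega>) \<in> borel_measurable M"
  "(\<lambda>\<omega>. \<Sum>i=1..n. \<alpha> i * d i \<omega>) \<in> borel_measurable M"
  using borel_measurable_d borel_measurable_v by (auto intro!: borel_measurable_sum)

lemma AE_v_nonneg: "AE \<omega> in M. \<forall>i\<in>{1..n}. 0 \<le> v (i - 1) \<omega>"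
proof (rule AE_finite_allI)
  fix i assume i: "i \<in> {1..n}"
  interpret finite_measure_subalgebra M "F (i - 1)"
    using i by (intro finite_measure_subalgebra_F) auto
  have "AE \<omega> in M. 0 \<le> v (i - 1) \<omega> / 2"
    using cond_mgf_le[OF i, of 1] v_measurable[OF i]
    by (intro AE_nonneg_of_nn_cond_exp_exp_le[OF integrable_d[OF i] cond_exp_d[OF i]]) simp_all
  then show "AE \<omega> in M. 0 \<le> v (i - 1) \<omega>" by simp
qed simp

lemma borel_measurable_supermart_exponent:
  assumes "k \<le> n"
  shows "supermart_exponent \<theta> d v k \<in> borel_measurable (F k)"
proof -
  have "(\<lambda>\<omega>. \<theta> i * d i \<omega> - (\<theta> i)\<^sup>2 / 2 * v (i - 1) \<omega>) \<in> borel_measurable (F k)"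
    if "i \<in> {1..k}" for i
  proof -
    have "d i \<in> borel_measurable (F k)"
      using that assms by (intro borel_measurable_F_mono[OF _ _ borel_borel_measurable_d_F]) auto
    moreover have "v (i - 1) \<in> borel_measurable (F k)"
      using that assms by (intro borel_measurable_F_mono[OF _ _ v_measurable]) auto
    ultimately show ?thesis by measurable
  qed
  then show ?thesis
    unfolding supermart_exponent_def by (rule borel_measurable_sum)
qed

lemma nn_integral_exp_supermart_exponent_le_1:
  assumes \<theta>_pos: "\<And>i. i \<in> {1..n} \<Longrightarrow> 0 < \<theta> i" and "k \<le> n"
  shows "(\<integral>\<^sup>+\<omega>. ennreal (exp (supermart_exponent \<theta> d v k \<omega>)) \<partial>M) \<le> 1"
  using \<open>k \<le> n\<close>
proof (induction k)
  case 0
  then show ?case by (simp add: supermart_exponent_def emeasure_space_1)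
next
  case (Suc k)
  let ?L = "supermart_exponent \<theta> d v"
  let ?t = "\<theta> (Suc k)"
  have i: "Suc k \<in> {1..n}" using Suc.prems by simp
  interpret finite_measure_subalgebra M "F k"
    using Suc.prems by (intro finite_measure_subalgebra_F) simp
  have [measurable]: "?L k \<in> borel_measurable (F k)" "v k \<in> borel_measurable (F k)"
    using Suc.prems borel_measurable_supermart_exponent v_measurable[OF i] by auto
  have [measurable]: "d (Suc k) \<in> borel_measurable M"
    using borel_measurable_d[OF i] .
  have "(\<integral>\<^sup>+\<omega>. ennreal (exp (?L (Suc k) \<omega>)) \<partial>M)
      = (\<integral>\<^sup>+\<omega>. ennreal (exp (?L k \<omega> - ?t\<^sup>2 / 2 * v k \<omega>)) * ennreal (exp (?t * d (Suc k) \<omega>)) \<partial>M)"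
    by (simp add: supermart_exponent_Suc ennreal_mult''[symmetric] exp_add[symmetric] algebra_simps)
  also have "\<dots> = (\<integral>\<^sup>+\<omega>. ennreal (exp (?L k \<omega> - ?t\<^sup>2 / 2 * v k \<omega>))
                      * nn_cond_exp M (F k) (\<lambda>\<omega>. ennreal (exp (?t * d (Suc k) \<omega>))) \<omega> \<partial>M)"
    by (rule nn_cond_exp_intg[symmetric]) measurable
  also have "\<dots> \<le> (\<integral>\<^sup>+\<omega>. ennreal (exp (?L k \<omega> - ?t\<^sup>2 / 2 * v k \<omega>))
                      * ennreal (exp (?t\<^sup>2 / 2 * v k \<omega>)) \<partial>M)"
  proof -
    have "AE \<omega> in M. nn_cond_exp M (F k) (\<lambda>\<omega>. ennreal (exp (?t * d (Suc k) \<omega>))) \<omega>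
        \<le> ennreal (exp (?t\<^sup>2 / 2 * v k \<omega>))"
      using cond_mgf_le[OF i \<theta>_pos[OF i]] by simp
    then show ?thesis
      by (rule nn_integral_mono_AE[OF AE_mp[OF _ AE_I2]]) (auto intro: mult_left_mono)
  qed
  also have "\<dots> = (\<integral>\<^sup>+\<omega>. ennreal (exp (?L k \<omega>)) \<partial>M)"
    by (simp add: ennreal_mult''[symmetric] exp_add[symmetric])
  also have "\<dots> \<le> 1" using Suc by simp
  finally show ?case .
qed

lemma measure_sum_ge_and_variance_le:
  fixes l c x R :: real and \<alpha> :: "nat \<Rightarrow> real"
  assumes "0 \<le> l" "0 \<le> c"
    and \<theta>_pos: "\<And>i. i \<in> {1..n} \<Longrightarrow> 0 < l + c * \<alpha> i"
    and \<theta>_le: "\<And>i. i \<in> {1..n} \<Longrightarrow> (l + c * \<alpha> i)\<^sup>2 / 2 \<le> c"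
  shows "measure M {\<omega> \<in> space M. x \<le> (\<Sum>i=1..n. d i \<omega>)
            \<and> (\<Sum>i=1..n. v (i - 1) \<omega>) \<le> (\<Sum>i=1..n. \<alpha> i * d i \<omega>) + R}
         \<le> exp (- (l * x - c * R))"
proof -
  define E where "E = {\<omega> \<in> space M. x \<le> (\<Sum>i=1..n. d i \<omega>)
            \<and> (\<Sum>i=1..n. v (i - 1) \<omega>) \<le> (\<Sum>i=1..n. \<alpha> i * d i \<omega>) + R}"
  let ?L = "supermart_exponent (\<lambda>i. l + c * \<alpha> i) d v n"
  have [measurable]: "E \<in> sets M" unfolding E_def by measurable
  \<comment> \<open>Markov's inequality for the exponential supermartingale\<close>
  have "ennreal (exp (l * x - c * R)) * emeasure M E
      = (\<integral>\<^sup>+\<omega>. ennreal (exp (l * x - c * R)) * indicator E \<omega> \<partial>M)"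
    by (simp add: nn_integral_cmult_indicator)
  also have "\<dots> \<le> (\<integral>\<^sup>+\<omega>. ennreal (exp (?L \<omega>)) \<partial>M)"
    using AE_v_nonneg
  proof (intro nn_integral_mono_AE, eventually_elim)
    case (elim \<omega>)
    show ?case
    proof (cases "\<omega> \<in> E")
      case True
      then have "l * x - c * R \<le> ?L \<omega>"
        using elim by (intro supermart_exponent_ge[OF assms(1,2) _ \<theta>_le]) (auto simp: E_def)
      with True show ?thesis by simp
    qed simp
  qed
  also have "\<dots> \<le> 1"
    by (intro nn_integral_exp_supermart_exponent_le_1 \<theta>_pos order_refl)
  finally have "exp (l * x - c * R) * measure M E \<le> 1"
    by (simp add: emeasure_eq_measure ennreal_mult''[symmetric] ennreal_le_iff)
  then have "measure M E \<le> 1 / exp (l * x - c * R)"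
    by (simp add: le_divide_eq mult.commute)
  then show ?thesis
    unfolding E_def[symmetric] exp_minus by (simp add: inverse_eq_divide)
qed

lemma measure_sum_ge_le_of_variance_bound:
  fixes l c x R \<delta> :: real and \<alpha> :: "nat \<Rightarrow> real"
  assumes "0 \<le> l" "0 \<le> c"
    and "\<And>i. i \<in> {1..n} \<Longrightarrow> 0 < l + c * \<alpha> i"
    and "\<And>i. i \<in> {1..n} \<Longrightarrow> (l + c * \<alpha> i)\<^sup>2 / 2 \<le> c"
    and variance_bound: "measure M {\<omega> \<in> space M.
          (\<Sum>i=1..n. v (i - 1) \<omega>) \<le> (\<Sum>i=1..n. \<alpha> i * d i \<omega>) + R} \<ge> 1 - \<delta>"
  shows "measure M {\<omega> \<in> space M. x \<le> (\<Sum>i=1..n. d i \<omega>)} \<le> \<delta> + exp (- (l * x - c * R))"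
proof -
  let ?S = "\<lambda>\<omega>. \<Sum>i=1..n. d i \<omega>" and ?V = "\<lambda>\<omega>. \<Sum>i=1..n. v (i - 1) \<omega>"
    and ?A = "\<lambda>\<omega>. \<Sum>i=1..n. \<alpha> i * d i \<omega>"
  define G where "G = {\<omega> \<in> space M. ?V \<omega> \<le> ?A \<omega> + R}"
  have [measurable]: "G \<in> sets M" unfolding G_def by measurable
  have "measure M {\<omega> \<in> space M. x \<le> ?S \<omega>}
      \<le> measure M ({\<omega> \<in> space M. x \<le> ?S \<omega> \<and> ?V \<omega> \<le> ?A \<omega> + R} \<union> (space M - G))"
    by (rule finite_measure_mono) (fastforce simp: G_def, measurable)
  also have "\<dots> \<le> measure M {\<omega> \<in> space M. x \<le> ?S \<omega> \<and> ?V \<omega> \<le> ?A \<omega> + R} + measure M (space M - G)"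
    by (intro measure_Un_le) measurable
  also have "\<dots> \<le> exp (- (l * x - c * R)) + \<delta>"
  proof (rule add_mono)
    show "measure M {\<omega> \<in> space M. x \<le> ?S \<omega> \<and> ?V \<omega> \<le> ?A \<omega> + R} \<le> exp (- (l * x - c * R))"
      by (rule measure_sum_ge_and_variance_le) (use assms in auto)
    show "measure M (space M - G) \<le> \<delta>"
      using variance_bound unfolding G_def[symmetric] by (simp add: prob_compl)
  qed
  finally show ?thesis by simp
qed

end


theorem lemmaC3:
  fixes M :: "'a measure" and F :: "nat \<Rightarrow> 'a measure"
    and d v :: "nat \<Rightarrow> 'a \<Rightarrow> real" and \<alpha> :: "nat \<Rightarrow> real"
    and n :: nat and \<delta> R x :: real
  assumes "prob_space M"
    and "mart_diff_seq M F d n"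
    and "\<And>i. i \<in> {1..n} \<Longrightarrow> v (i - 1) \<in> borel_measurable (F (i - 1))"
    and "\<And>i l. i \<in> {1..n} \<Longrightarrow> l > 0 \<Longrightarrow>
          AE \<omega> in M. nn_cond_exp M (F (i - 1)) (\<lambda>\<omega>. ennreal (exp (l * d i \<omega>))) \<omega>
                       \<le> ennreal (exp (l\<^sup>2 / 2 * v (i - 1) \<omega>))"
    and "0 < \<delta>" and "\<delta> < 1"
    and "R > 0" and "\<And>i. i \<in> {1..n} \<Longrightarrow> \<alpha> i > 0"
    and "measure M {\<omega> \<in> space M. (\<Sum>i=1..n. v (i - 1) \<omega>) \<le> (\<Sum>i=1..n. \<alpha> i * d i \<omega>) + R}
           \<ge> 1 - \<delta>"
    and "x > 0"
  shows "measure M {\<omega> \<in> space M. (\<Sum>i=1..n. d i \<omega>) \<ge> x}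
           \<le> \<delta> + exp (- (x\<^sup>2 / (4 * Max (\<alpha> ` {1..n}) * x + 8 * R)))"
proof -
  interpret cond_subgaussian_mds M F d v n
    using assms(1-4) by (intro cond_subgaussian_mds.intro cond_subgaussian_mds_axioms.intro)
  show ?thesis
  proof (cases "n = 0")
    case True
    then show ?thesis using \<open>x > 0\<close> \<open>\<delta> > 0\<close> by (simp add: add_nonneg_nonneg)
  next
    case False
    define a where "a = Max (\<alpha> ` {1..n})"
    have \<alpha>_le: "\<alpha> i \<le> a" if "i \<in> {1..n}" for i
      using that by (simp add: a_def)
    have "0 < a" using \<alpha>_le[of 1] assms(8)[of 1] False by simp
    define l where "l = x / (2 * a * x + 4 * R)"
    note choice = chernoff_parameter_choice[OF \<open>0 < a\<close> \<open>R > 0\<close> \<open>x > 0\<close>, folded l_def]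
    have "0 < l + 2 * l\<^sup>2 * \<alpha> i" "(l + 2 * l\<^sup>2 * \<alpha> i)\<^sup>2 / 2 \<le> 2 * l\<^sup>2"
      if "i \<in> {1..n}" for i
      using choice(1) choice(2)[of "\<alpha> i"] assms(8)[OF that] \<alpha>_le[OF that]
      by (auto intro!: add_pos_pos)
    then have "measure M {\<omega> \<in> space M. (\<Sum>i=1..n. d i \<omega>) \<ge> x}
        \<le> \<delta> + exp (- (l * x - 2 * l\<^sup>2 * R))"
      using choice(1) assms(9) by (intro measure_sum_ge_le_of_variance_bound) auto
    also have "\<dots> \<le> \<delta> + exp (- (x\<^sup>2 / (4 * a * x + 8 * R)))"
      using choice(3) by simp
    finally show ?thesis by (simp add: a_def)
  qed
qed

end
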